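(* Let $\Omega\subset\mathbb{R}^d$ be measurable, let $\varrho:\mathbb{R}\to\mathbb{R}$ be measurable with $\varrho(0)=0$, and let $\sigma\in\mathbb{N}$. For $f\in L^2(\Omega)$ and $\varepsilon\in(0,1)$ let $W^{\sigma,\varrho}_\varepsilon(f):=\inf\{W\in\mathbb{N}:\exists g\in\mathcal{NN}^{\sigma,\varrho}_{d,W}\text{ with }\|f-g\|_{L^2(\Omega)}\le\varepsilon\}\in\mathbb{N}\cup\{\infty\}$, and for $\tau>0$ let \[\mathcal{A}^\tau_{\mathcal{NN},\sigma,\varrho}:=\{f\in L^2(\Omega):\exists C>0\ \forall\varepsilon\in(0,1):W^{\sigma,\varrho}_\varepsilon(f)\le C\varepsilon^{-\tau}\}.\] Then there is a codec $\mathcal{C}=((E_R,D_R))_{R\in\mathbb{N}}$ with $E_R:L^2(\Omega)\to\{0,1\}^R$, $D_R:\{0,1\}^R\to L^2(\Omega)$ (depending on $\sigma,\varrho,\Omega$) such that for every $\tau>0$, \[\mathcal{A}^\tau_{\mathcal{NN},\sigma,\varrho}\subset\{f\in L^2(\Omega):\sup_{R\in\mathbb{N}}R^{\tau^{-1}-\delta}\|f-D_R(E_R(f))\|_{L^2(\Omega)}<\infty\}\qquad\forall\delta\in(0,\tau^{-1}).\]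
   Context: Neural networks: for $L\in\mathbb{N}$ and $\mathbf{N}=(N_0,\dots,N_L)\subset\mathbb{N}$ with $N_0=d$, a network is $\Phi=((A_1,b_1),\dots,(A_L,b_L))$ with $A_\ell\in\mathbb{R}^{N_\ell\times N_{\ell-1}}$, $b_\ell\in\mathbb{R}^{N_\ell}$; its realization $R_\varrho\Phi:\mathbb{R}^d\to\mathbb{R}^{N_L}$ is $x\mapsto x^{(L)}$ with $x^{(0)}=x$, $x^{(\ell+1)}=\varrho(A_{\ell+1}x^{(\ell)}+b_{\ell+1})$ for $0\le\ell\le L-2$ (componentwise), $x^{(L)}=A_Lx^{(L-1)}+b_L$. $W(\Phi)=\sum_\ell(\|A_\ell\|_{\ell^0}+\|b_\ell\|_{\ell^0})$ (number of nonzero entries), $d_{\mathrm{in}}(\Phi)=N_0$, $d_{\mathrm{out}}(\Phi)=N_L$. $\Phi$ is $(\sigma,W)$-quantized if all entries of all $A_\ell,b_\ell$ lie in $[-W^{\sigma\lceil\log_2W\rceil},W^{\sigma\lceil\log_2W\rceil}]\cap2^{-\sigma\lceil\log_2W\rceil^2}\mathbb{Z}$. $\mathcal{NN}^{\sigma,\varrho}_{d,W}=\{R_\varrho\Phi:\Phi\ (\sigma,W)\text{-quantized},\ W(\Phi)\le W,\ d_{\mathrm{in}}(\Phi)=d,\ d_{\mathrm{out}}(\Phi)=1\}$, with functions restricted to $\Omega$. *)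

theory Defs
  imports "HOL-Analysis.Analysis" "HOL-Library.Extended_Nat"
begin

text \<open>Points of R^d are represented as functions nat => real whose coordinates
  0..d-1 are relevant; the ambient measure is the d-fold product of Lebesgue
  measure on the index set {..<d}.\<close>

definition lebd :: "nat \<Rightarrow> (nat \<Rightarrow> real) measure" where
  "lebd d = PiM {..<d} (\<lambda>_. lborel)"

definition lebOm :: "nat \<Rightarrow> (nat \<Rightarrow> real) set \<Rightarrow> (nat \<Rightarrow> real) measure" where
  "lebOm d \<Omega> = restrict_space (lebd d) \<Omega>"

definition L2 :: "nat \<Rightarrow> (nat \<Rightarrow> real) set \<Rightarrow> ((nat \<Rightarrow> real) \<Rightarrow> real) set" where
  "L2 d \<Omega> = {f. f \<in> borel_measurable (lebOm d \<Omega>) \<and>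
                   (\<integral>\<^sup>+ x. ennreal ((f x)\<^sup>2) \<partial>lebOm d \<Omega>) < \<infinity>}"

definition L2dist_sq :: "nat \<Rightarrow> (nat \<Rightarrow> real) set \<Rightarrow> ((nat \<Rightarrow> real) \<Rightarrow> real)
    \<Rightarrow> ((nat \<Rightarrow> real) \<Rightarrow> real) \<Rightarrow> ennreal" where
  "L2dist_sq d \<Omega> f g = (\<integral>\<^sup>+ x. ennreal ((f x - g x)\<^sup>2) \<partial>lebOm d \<Omega>)"

definition L2dist :: "nat \<Rightarrow> (nat \<Rightarrow> real) set \<Rightarrow> ((nat \<Rightarrow> real) \<Rightarrow> real)
    \<Rightarrow> ((nat \<Rightarrow> real) \<Rightarrow> real) \<Rightarrow> real" where
  "L2dist d \<Omega> f g = sqrt (enn2real (L2dist_sq d \<Omega> f g))"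

text \<open>A network is given by its architecture (N_0,...,N_L) as a
  list of length L+1 and its layers (A_l, b_l) as a list of length L; only the
  entries A_l i j with i < N_l, j < N_(l-1) and b_l i with i < N_l are relevant.\<close>

type_synonym layer = "(nat \<Rightarrow> nat \<Rightarrow> real) \<times> (nat \<Rightarrow> real)"

definition affine :: "nat \<Rightarrow> nat \<Rightarrow> layer \<Rightarrow> (nat \<Rightarrow> real) \<Rightarrow> (nat \<Rightarrow> real)" where
  "affine m n l x = (\<lambda>i. if i < m then (\<Sum>j<n. fst l i j * x j) + snd l i else 0)"

fun realize :: "(real \<Rightarrow> real) \<Rightarrow> nat list \<Rightarrow> layer list \<Rightarrow> (nat \<Rightarrow> real) \<Rightarrow> (nat \<Rightarrow> real)" where
  "realize \<rho> (n # m # ns) [l] x = affine m n l x"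
| "realize \<rho> (n # m # ns) (l # l' # ls) x =
     realize \<rho> (m # ns) (l' # ls) (\<lambda>i. if i < m then \<rho> (affine m n l x i) else 0)"
| "realize \<rho> ns ls x = x"

definition valid_net :: "nat \<Rightarrow> nat list \<Rightarrow> layer list \<Rightarrow> bool" where
  "valid_net d ns ls \<longleftrightarrow> length ls \<ge> 1 \<and> length ns = length ls + 1 \<and>
     hd ns = d \<and> last ns = 1"

definition num_weights :: "nat list \<Rightarrow> layer list \<Rightarrow> nat" where
  "num_weights ns ls = (\<Sum>k<length ls.
      card {(i, j). i < ns ! Suc k \<and> j < ns ! k \<and> fst (ls ! k) i j \<noteq> 0}
    + card {i. i < ns ! Suc k \<and> snd (ls ! k) i \<noteq> 0})"

definition qgrid :: "nat \<Rightarrow> nat \<Rightarrow> real \<Rightarrow> bool" where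
  "qgrid \<sigma> W a \<longleftrightarrow>
     (let k = nat \<lceil>log 2 (real W)\<rceil> in
        \<bar>a\<bar> \<le> real W ^ (\<sigma> * k) \<and> a * 2 ^ (\<sigma> * k\<^sup>2) \<in> \<int>)"

definition quantized :: "nat \<Rightarrow> nat \<Rightarrow> nat list \<Rightarrow> layer list \<Rightarrow> bool" where
  "quantized \<sigma> W ns ls \<longleftrightarrow> (\<forall>k<length ls.
      (\<forall>i j. i < ns ! Suc k \<and> j < ns ! k \<longrightarrow> qgrid \<sigma> W (fst (ls ! k) i j)) \<and>
      (\<forall>i. i < ns ! Suc k \<longrightarrow> qgrid \<sigma> W (snd (ls ! k) i)))"

text \<open>The class NN^{sigma,rho}_{d,W} (as functions on points; restriction to Omega
  is implicit since only values on Omega enter the L2 norm).\<close>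
definition NN :: "nat \<Rightarrow> (real \<Rightarrow> real) \<Rightarrow> nat \<Rightarrow> nat \<Rightarrow> ((nat \<Rightarrow> real) \<Rightarrow> real) set" where
  "NN \<sigma> \<rho> d W = {(\<lambda>x. realize \<rho> ns ls x 0) | ns ls.
      valid_net d ns ls \<and> quantized \<sigma> W ns ls \<and> num_weights ns ls \<le> W}"

definition W_eps :: "nat \<Rightarrow> (real \<Rightarrow> real) \<Rightarrow> nat \<Rightarrow> (nat \<Rightarrow> real) set
    \<Rightarrow> ((nat \<Rightarrow> real) \<Rightarrow> real) \<Rightarrow> real \<Rightarrow> enat" where
  "W_eps \<sigma> \<rho> d \<Omega> f \<epsilon> = (INF W \<in> {W. W \<ge> 1 \<and>
       (\<exists>g \<in> NN \<sigma> \<rho> d W. L2dist_sq d \<Omega> f g \<le> ennreal (\<epsilon>\<^sup>2))}. enat W)"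

definition approx_space :: "real \<Rightarrow> nat \<Rightarrow> (real \<Rightarrow> real) \<Rightarrow> nat \<Rightarrow> (nat \<Rightarrow> real) set
    \<Rightarrow> ((nat \<Rightarrow> real) \<Rightarrow> real) set" where
  "approx_space \<tau> \<sigma> \<rho> d \<Omega> = {f \<in> L2 d \<Omega>. \<exists>C>0. \<forall>\<epsilon>. 0 < \<epsilon> \<and> \<epsilon> < 1 \<longrightarrow>
       W_eps \<sigma> \<rho> d \<Omega> f \<epsilon> \<noteq> \<infinity> \<and>
       real (the_enat (W_eps \<sigma> \<rho> d \<Omega> f \<epsilon>)) \<le> C * \<epsilon> powr (- \<tau>)}"

end

theory Submission
  imports Defs "HOL-Real_Asymp.Real_Asymp"
begin

text \<open>Since \<open>\<rho> 0 = 0\<close>, a network with at most \<open>W\<close> nonzero weights can be normalized without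
  changing its realization: everything up to its last vanishing hidden layer is replaced by a
  single zero layer, and every hidden neuron that receives no nonzero weight is deleted. The
  result has depth at most \<open>W + 2\<close> and widths at most \<open>d + W\<close>, so it is determined by its widths
  and by the set of its at most \<open>W\<close> nonzero entries together with their positions. Quantized
  weights range over a grid of \<open>2^O(\<sigma> log^2 W)\<close> points, hence there are only
  \<open>2^O(\<sigma> W log^2 W)\<close> realizations of such networks.

  At rate \<open>R\<close> the codec fixes the largest \<open>W \<le> R\<close> for which these realizations can be
  numbered by \<open>R\<close> bits and encodes \<open>f\<close> by the number of a nearest one. For every \<open>\<eta> > 0\<close>
  eventually \<open>W \<ge> R^(1 - \<eta>)\<close>, so if \<open>f\<close> is approximated to accuracy \<open>\<epsilon>\<close> by networks with
  \<open>C \<epsilon>^(-\<tau>)\<close> weights, the coding error is at most \<open>C^(1/\<tau>) R^(-(1 - \<eta>)/\<tau>)\<close>.\<close>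

definition act_layer :: "(real \<Rightarrow> real) \<Rightarrow> nat \<Rightarrow> nat \<Rightarrow> layer \<Rightarrow> (nat \<Rightarrow> real) \<Rightarrow> (nat \<Rightarrow> real)" where
  "act_layer \<rho> m n l x = (\<lambda>i. if i < m then \<rho> (affine m n l x i) else 0)"

fun hidden :: "(real \<Rightarrow> real) \<Rightarrow> nat list \<Rightarrow> layer list \<Rightarrow> (nat \<Rightarrow> real) \<Rightarrow> nat \<Rightarrow> (nat \<Rightarrow> real)" where
  "hidden \<rho> ns ls x 0 = x"
| "hidden \<rho> ns ls x (Suc k) = act_layer \<rho> (ns ! Suc k) (ns ! k) (ls ! k) (hidden \<rho> ns ls x k)"

lemma hidden_Cons:
  "hidden \<rho> (n # ns) (l # ls) x (Suc k) = hidden \<rho> ns ls (act_layer \<rho> (ns ! 0) n l x) k"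
  by (induction k) auto

lemma realize_eq_affine_hidden:
  assumes "length ns = length ls + 1" "length ls \<ge> 1"
  shows "realize \<rho> ns ls x = affine (ns ! length ls) (ns ! (length ls - 1)) (ls ! (length ls - 1))
            (hidden \<rho> ns ls x (length ls - 1))"
  using assms
proof (induction \<rho> ns ls x rule: realize.induct)
  case (2 \<rho> n m ns l l' ls x)
  have e: "realize \<rho> (n # m # ns) (l # l' # ls) x = realize \<rho> (m # ns) (l' # ls) (act_layer \<rho> m n l x)"
    by (simp add: act_layer_def)
  have h: "hidden \<rho> (n # m # ns) (l # l' # ls) x (Suc (length ls))
      = hidden \<rho> (m # ns) (l' # ls) (act_layer \<rho> m n l x) (length ls)"
    by (simp only: hidden_Cons nth_Cons_0)
  show ?case unfolding e using 2 h by (simp del: hidden.simps add: act_layer_def)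
qed auto

lemma measurable_affine:
  assumes "\<And>i. (\<lambda>y. h y i) \<in> borel_measurable M"
  shows "(\<lambda>y. affine m n l (h y) i) \<in> borel_measurable M"
proof -
  have "(\<lambda>y. (\<Sum>j<n. fst l i j * h y j) + snd l i) \<in> borel_measurable M"
    using assms by (intro borel_measurable_add borel_measurable_sum borel_measurable_times) auto
  then show ?thesis unfolding affine_def by simp
qed

lemma measurable_hidden:
  assumes "\<rho> \<in> borel_measurable borel" "\<And>i. (\<lambda>y. h y i) \<in> borel_measurable M"
  shows "(\<lambda>y. hidden \<rho> ns ls (h y) k i) \<in> borel_measurable M"
proof (induction k arbitrary: i)
  case (Suc k)
  have "(\<lambda>y. \<rho> (affine (ns ! Suc k) (ns ! k) (ls ! k) (hidden \<rho> ns ls (h y) k) i))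
      \<in> borel_measurable M"
    by (rule measurable_compose[OF measurable_affine assms(1)]) (rule Suc)
  then show ?case by (simp add: act_layer_def)
qed (simp add: assms(2))

lemma measurable_realize:
  assumes "\<rho> \<in> borel_measurable borel" "\<And>i. (\<lambda>y. h y i) \<in> borel_measurable M"
    and "length ns = length ls + 1" "length ls \<ge> 1"
  shows "(\<lambda>y. realize \<rho> ns ls (h y) i) \<in> borel_measurable M"
  unfolding realize_eq_affine_hidden[OF assms(3,4)]
  by (intro measurable_affine measurable_hidden assms(1,2))

section \<open>Removing vanishing layers\<close>

lemma finite_index_pairs: "finite {(i, j). i < (a::nat) \<and> j < (b::nat) \<and> P i j}"
  by (rule finite_subset[of _ "{..<a} \<times> {..<b}"]) auto

definition vanishing_layer :: "nat list \<Rightarrow> layer list \<Rightarrow> nat \<Rightarrow> bool" where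
  "vanishing_layer ns ls t \<longleftrightarrow>
     (\<forall>i<ns ! Suc t. snd (ls ! t) i = 0 \<and> (\<forall>j<ns ! t. fst (ls ! t) i j = 0))"

definition null_layer :: layer where
  "null_layer = (\<lambda>_ _. 0, \<lambda>_. 0)"

definition layer_weights :: "nat list \<Rightarrow> layer list \<Rightarrow> nat \<Rightarrow> nat" where
  "layer_weights ns ls k = card {(i, j). i < ns ! Suc k \<and> j < ns ! k \<and> fst (ls ! k) i j \<noteq> 0}
    + card {i. i < ns ! Suc k \<and> snd (ls ! k) i \<noteq> 0}"

lemma num_weights_eq_sum_layer_weights:
  "num_weights ns ls = (\<Sum>k<length ls. layer_weights ns ls k)"
  unfolding num_weights_def layer_weights_def by simp

lemma layer_weights_le_num_weights: "t < length ls \<Longrightarrow> layer_weights ns ls t \<le> num_weights ns ls"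
  unfolding num_weights_eq_sum_layer_weights by (rule member_le_sum) auto

lemma layer_weights_pos:
  assumes "\<not> vanishing_layer ns ls t"
  shows "1 \<le> layer_weights ns ls t"
proof -
  from assms obtain i where "i < ns ! Suc t"
    and "snd (ls ! t) i \<noteq> 0 \<or> (\<exists>j<ns ! t. fst (ls ! t) i j \<noteq> 0)"
    unfolding vanishing_layer_def by blast
  then have "{i. i < ns ! Suc t \<and> snd (ls ! t) i \<noteq> 0} \<noteq> {} \<or>
      {(i, j). i < ns ! Suc t \<and> j < ns ! t \<and> fst (ls ! t) i j \<noteq> 0} \<noteq> {}"
    by blast
  moreover have "finite {i. i < ns ! Suc t \<and> snd (ls ! t) i \<noteq> 0}" by simp
  moreover note finite_index_pairs[of "ns ! Suc t" "ns ! t" "\<lambda>i j. fst (ls ! t) i j \<noteq> 0"]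
  ultimately have "card {i. i < ns ! Suc t \<and> snd (ls ! t) i \<noteq> 0} > 0 \<or>
      card {(i, j). i < ns ! Suc t \<and> j < ns ! t \<and> fst (ls ! t) i j \<noteq> 0} > 0"
    by (simp add: card_gt_0_iff)
  then show ?thesis unfolding layer_weights_def by linarith
qed

lemma card_nonvanishing_layers_le:
  assumes "T \<subseteq> {..<length ls}" "\<And>t. t \<in> T \<Longrightarrow> \<not> vanishing_layer ns ls t"
  shows "card T \<le> num_weights ns ls"
proof -
  have "card T = (\<Sum>t\<in>T. 1)" by simp
  also have "\<dots> \<le> (\<Sum>t\<in>T. layer_weights ns ls t)"
    using assms layer_weights_pos by (intro sum_mono) auto
  also have "\<dots> \<le> (\<Sum>t<length ls. layer_weights ns ls t)"
    using assms(1) by (intro sum_mono2) auto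
  finally show ?thesis by (simp add: num_weights_eq_sum_layer_weights)
qed

lemma depth_le_num_weights:
  assumes "\<And>s. 0 < s \<Longrightarrow> Suc (Suc s) \<le> length ls \<Longrightarrow> \<not> vanishing_layer ns ls s"
  shows "length ls \<le> num_weights ns ls + 2"
proof -
  have "card (Suc ` {..<length ls - 2}) \<le> num_weights ns ls"
    by (rule card_nonvanishing_layers_le) (use assms in auto)
  then show ?thesis by (simp add: card_image)
qed

lemma hidden_after_vanishing_layer:
  assumes "\<rho> 0 = 0" "vanishing_layer ns ls t"
  shows "hidden \<rho> ns ls x (Suc t) = (\<lambda>_. 0)"
  using assms unfolding vanishing_layer_def by (auto simp: act_layer_def affine_def)

text \<open>If layer \<open>t\<close> vanishes, the layers \<open>0, \<dots>, t\<close> can be replaced by one null layer.\<close>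

definition trim_widths :: "nat \<Rightarrow> nat list \<Rightarrow> nat list" where
  "trim_widths t ns = ns ! 0 # drop (Suc t) ns"

definition trim_layers :: "nat \<Rightarrow> layer list \<Rightarrow> layer list" where
  "trim_layers t ls = null_layer # drop (Suc t) ls"

lemma nth_trim_widths_Suc: "Suc t \<le> length ns \<Longrightarrow> trim_widths t ns ! Suc j = ns ! (Suc t + j)"
  unfolding trim_widths_def by simp

lemma nth_trim_layers_Suc: "Suc t \<le> length ls \<Longrightarrow> trim_layers t ls ! Suc j = ls ! (Suc t + j)"
  unfolding trim_layers_def by simp

lemma length_trim_layers: "length (trim_layers t ls) = Suc (length ls - Suc t)"
  unfolding trim_layers_def by simp

lemma length_trim_widths: "length (trim_widths t ns) = Suc (length ns - Suc t)"
  unfolding trim_widths_def by simp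

lemma layer_weights_trim_0: "layer_weights ns (trim_layers t ls) 0 = 0"
  unfolding layer_weights_def trim_layers_def null_layer_def by simp

lemma layer_weights_trim:
  assumes "Suc t \<le> length ns" "Suc t \<le> length ls"
  shows "layer_weights (trim_widths t ns) (trim_layers t ls) (Suc j) = layer_weights ns ls (Suc t + j)"
  unfolding layer_weights_def nth_trim_widths_Suc[OF assms(1)] nth_trim_layers_Suc[OF assms(2)]
    add_Suc_right ..

lemma vanishing_layer_trim:
  assumes "Suc t \<le> length ns" "Suc t \<le> length ls"
  shows "vanishing_layer (trim_widths t ns) (trim_layers t ls) (Suc j) = vanishing_layer ns ls (Suc t + j)"
  unfolding vanishing_layer_def nth_trim_widths_Suc[OF assms(1)] nth_trim_layers_Suc[OF assms(2)]
    add_Suc_right ..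

lemma hidden_trim:
  assumes "\<rho> 0 = 0" "vanishing_layer ns ls t" "Suc t \<le> length ls" "Suc t \<le> length ns"
  shows "hidden \<rho> (trim_widths t ns) (trim_layers t ls) x (Suc k) = hidden \<rho> ns ls x (Suc t + k)"
proof (induction k)
  case 0
  show ?case
    using assms(1) hidden_after_vanishing_layer[where \<rho>=\<rho>, OF assms(1,2)]
    by (auto simp: act_layer_def affine_def trim_layers_def null_layer_def)
next
  case (Suc k)
  then show ?case
    using assms(3,4) by (simp only: hidden.simps nth_trim_widths_Suc nth_trim_layers_Suc add_Suc_right)
qed

lemma realize_trim:
  assumes "\<rho> 0 = 0" "vanishing_layer ns ls t" "Suc (Suc t) \<le> length ls" "length ns = length ls + 1"
  shows "realize \<rho> (trim_widths t ns) (trim_layers t ls) x = realize \<rho> ns ls x"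
proof -
  define k where "k = length ls - Suc (Suc t)"
  have L: "length ls = Suc t + Suc k" "length ls - 1 = Suc t + k"
    using assms(3) unfolding k_def by auto
  have len: "length (trim_layers t ls) = Suc (Suc k)"
    "length (trim_widths t ns) = length (trim_layers t ls) + 1"
    using L assms(4) by (simp_all add: length_trim_layers length_trim_widths)
  have "realize \<rho> (trim_widths t ns) (trim_layers t ls) x
      = affine (ns ! (Suc t + Suc k)) (ns ! (Suc t + k)) (ls ! (Suc t + k)) (hidden \<rho> ns ls x (Suc t + k))"
    using realize_eq_affine_hidden[OF len(2)] len(1) hidden_trim[where \<rho>=\<rho>, OF assms(1,2)] assms(3,4)
    by (simp add: nth_trim_widths_Suc nth_trim_layers_Suc del: hidden.simps)
  also have "\<dots> = realize \<rho> ns ls x"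
    using realize_eq_affine_hidden[OF assms(4)] assms(3) L by (simp del: hidden.simps)
  finally show ?thesis .
qed

lemma valid_net_trim:
  assumes "valid_net d ns ls" "Suc (Suc t) \<le> length ls"
  shows "valid_net d (trim_widths t ns) (trim_layers t ls)"
  using assms unfolding valid_net_def trim_widths_def trim_layers_def
  by (cases ns) (auto simp: last_drop split: if_splits)

lemma quantized_trim:
  assumes "quantized \<sigma> W ns ls" "Suc t \<le> length ls" "length ns = length ls + 1"
  shows "quantized \<sigma> W (trim_widths t ns) (trim_layers t ls)"
  unfolding quantized_def
proof (intro allI impI)
  fix k assume k: "k < length (trim_layers t ls)"
  show "(\<forall>i j. i < trim_widths t ns ! Suc k \<and> j < trim_widths t ns ! k
           \<longrightarrow> qgrid \<sigma> W (fst (trim_layers t ls ! k) i j)) \<and>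
        (\<forall>i. i < trim_widths t ns ! Suc k \<longrightarrow> qgrid \<sigma> W (snd (trim_layers t ls ! k) i))"
  proof (cases k)
    case 0
    then show ?thesis by (simp add: trim_layers_def null_layer_def qgrid_def)
  next
    case (Suc j)
    then have "Suc t + j < length ls" using k by (simp add: length_trim_layers)
    then show ?thesis
      using assms unfolding quantized_def Suc
      by (simp add: nth_trim_widths_Suc nth_trim_layers_Suc)
  qed
qed

lemma num_weights_trim_le:
  assumes "Suc t \<le> length ls" "length ns = length ls + 1"
  shows "num_weights (trim_widths t ns) (trim_layers t ls) \<le> num_weights ns ls"
proof -
  have "num_weights (trim_widths t ns) (trim_layers t ls)
      = (\<Sum>j<length ls - Suc t. layer_weights ns ls (Suc t + j))"
    unfolding num_weights_eq_sum_layer_weights length_trim_layers sum.lessThan_Suc_shift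
    using assms by (simp add: layer_weights_trim layer_weights_trim_0)
  also have "\<dots> = (\<Sum>k\<in>(+) (Suc t) ` {..<length ls - Suc t}. layer_weights ns ls k)"
    by (subst sum.reindex) (auto simp: inj_on_def)
  also have "\<dots> \<le> num_weights ns ls"
    unfolding num_weights_eq_sum_layer_weights by (intro sum_mono2) auto
  finally show ?thesis .
qed

lemma reduce_depth:
  assumes "\<rho> 0 = 0" "valid_net d ns ls" "quantized \<sigma> W ns ls"
  shows "\<exists>ns' ls'. valid_net d ns' ls' \<and> quantized \<sigma> W ns' ls' \<and>
           num_weights ns' ls' \<le> num_weights ns ls \<and> length ls' \<le> num_weights ns' ls' + 2 \<and>
           (\<forall>x. realize \<rho> ns' ls' x = realize \<rho> ns ls x)"
proof -
  define Z where "Z = {t. Suc (Suc t) \<le> length ls \<and> vanishing_layer ns ls t}"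
  have len: "length ns = length ls + 1" using assms(2) unfolding valid_net_def by simp
  show ?thesis
  proof (cases "Z = {}")
    case True
    then have "length ls \<le> num_weights ns ls + 2"
      by (intro depth_le_num_weights) (auto simp: Z_def)
    then show ?thesis using assms(2,3) by blast
  next
    case False
    have "finite Z" by (rule finite_subset[of _ "{..<length ls}"]) (auto simp: Z_def)
    define t where "t = Max Z"
    have t: "Suc (Suc t) \<le> length ls" "vanishing_layer ns ls t"
      using Max_in[OF \<open>finite Z\<close> False] unfolding t_def Z_def by auto
    have last: "s \<le> t" if "s \<in> Z" for s
      using \<open>finite Z\<close> that unfolding t_def by simp
    have "length (trim_layers t ls) \<le> num_weights (trim_widths t ns) (trim_layers t ls) + 2"
    proof (rule depth_le_num_weights)
      fix s assume "0 < s" "Suc (Suc s) \<le> length (trim_layers t ls)"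
      then obtain j where j: "s = Suc j" "Suc (Suc (Suc t + j)) \<le> length ls"
        by (cases s) (auto simp: length_trim_layers)
      then have "\<not> vanishing_layer ns ls (Suc t + j)" using last[of "Suc t + j"] by (auto simp: Z_def)
      then show "\<not> vanishing_layer (trim_widths t ns) (trim_layers t ls) s"
        using t(1) len j(1) by (simp add: vanishing_layer_trim)
    qed
    moreover have "Suc t \<le> length ls" using t(1) by simp
    ultimately show ?thesis
      using valid_net_trim[OF assms(2) t(1)] quantized_trim[OF assms(3) _ len]
        num_weights_trim_le[OF _ len] realize_trim[where \<rho>=\<rho>, OF assms(1) t(2) t(1) len]
      by blast
  qed
qed

section \<open>Pruning inactive neurons\<close>

text \<open>Inactive hidden neurons output \<open>\<rho> 0 = 0\<close> and can therefore be deleted.\<close>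

definition active_neurons :: "nat list \<Rightarrow> layer list \<Rightarrow> nat \<Rightarrow> nat set" where
  "active_neurons ns ls t = (if t = 0 \<or> t = length ls then {..<ns ! t}
     else {i. i < ns ! t \<and> (snd (ls ! (t - 1)) i \<noteq> 0 \<or>
                              (\<exists>j<ns ! (t - 1). fst (ls ! (t - 1)) i j \<noteq> 0))})"

definition num_active :: "nat list \<Rightarrow> layer list \<Rightarrow> nat \<Rightarrow> nat" where
  "num_active ns ls t = card (active_neurons ns ls t)"

definition active_neuron :: "nat list \<Rightarrow> layer list \<Rightarrow> nat \<Rightarrow> nat \<Rightarrow> nat" where
  "active_neuron ns ls t r = sorted_list_of_set (active_neurons ns ls t) ! r"

definition pruned_layer :: "nat list \<Rightarrow> layer list \<Rightarrow> nat \<Rightarrow> layer" where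
  "pruned_layer ns ls t =
     (\<lambda>r s. if r < num_active ns ls (Suc t) \<and> s < num_active ns ls t
        then fst (ls ! t) (active_neuron ns ls (Suc t) r) (active_neuron ns ls t s) else 0,
      \<lambda>r. if r < num_active ns ls (Suc t) then snd (ls ! t) (active_neuron ns ls (Suc t) r) else 0)"

definition pruned_widths :: "nat list \<Rightarrow> layer list \<Rightarrow> nat list" where
  "pruned_widths ns ls = map (num_active ns ls) [0..<Suc (length ls)]"

definition pruned_layers :: "nat list \<Rightarrow> layer list \<Rightarrow> layer list" where
  "pruned_layers ns ls = map (pruned_layer ns ls) [0..<length ls]"

lemma active_neurons_subset: "active_neurons ns ls t \<subseteq> {..<ns ! t}"
  unfolding active_neurons_def by auto

lemma finite_active_neurons: "finite (active_neurons ns ls t)"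
  by (rule finite_subset[OF active_neurons_subset]) simp

lemma bij_betw_active_neuron:
  "bij_betw (active_neuron ns ls t) {..<num_active ns ls t} (active_neurons ns ls t)"
  unfolding active_neuron_def[abs_def] num_active_def
  by (rule bij_betw_nth) (auto simp: finite_active_neurons)

lemma active_neuron_less: "r < num_active ns ls t \<Longrightarrow> active_neuron ns ls t r < ns ! t"
  using bij_betw_apply[OF bij_betw_active_neuron] active_neurons_subset by blast

lemma inj_on_active_neuron: "inj_on (active_neuron ns ls t) {..<num_active ns ls t}"
  using bij_betw_active_neuron bij_betw_def by blast

lemma active_neurons_boundary: "t = 0 \<or> t = length ls \<Longrightarrow> active_neurons ns ls t = {..<ns ! t}"
  unfolding active_neurons_def by simp

lemma num_active_boundary: "t = 0 \<or> t = length ls \<Longrightarrow> num_active ns ls t = ns ! t"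
  unfolding num_active_def by (simp add: active_neurons_boundary)

lemma active_neuron_boundary:
  "t = 0 \<or> t = length ls \<Longrightarrow> r < ns ! t \<Longrightarrow> active_neuron ns ls t r = r"
  unfolding active_neuron_def
  by (simp add: active_neurons_boundary lessThan_atLeast0 sorted_list_of_set_range)

lemma nth_pruned_widths: "t \<le> length ls \<Longrightarrow> pruned_widths ns ls ! t = num_active ns ls t"
  unfolding pruned_widths_def by (simp del: upt_Suc)

lemma nth_pruned_layers: "t < length ls \<Longrightarrow> pruned_layers ns ls ! t = pruned_layer ns ls t"
  unfolding pruned_layers_def by simp

lemma length_pruned_widths: "length (pruned_widths ns ls) = length ls + 1"
  unfolding pruned_widths_def by simp

lemma length_pruned_layers: "length (pruned_layers ns ls) = length ls"
  unfolding pruned_layers_def by simp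

lemma hidden_inactive:
  assumes "\<rho> 0 = 0" "0 < t" "t < length ls" "i \<notin> active_neurons ns ls t"
  shows "hidden \<rho> ns ls x t i = 0"
proof -
  obtain t' where "t = Suc t'" using assms(2) by (cases t) auto
  then show ?thesis
    using assms(1,3,4) unfolding active_neurons_def by (auto simp: act_layer_def affine_def)
qed

lemma affine_pruned_layer:
  assumes "\<rho> 0 = 0" "t < length ls" "r < num_active ns ls (Suc t)"
    and y: "\<And>s. s < num_active ns ls t \<Longrightarrow> y s = hidden \<rho> ns ls x t (active_neuron ns ls t s)"
  shows "affine (num_active ns ls (Suc t)) (num_active ns ls t) (pruned_layer ns ls t) y r
       = affine (ns ! Suc t) (ns ! t) (ls ! t) (hidden \<rho> ns ls x t) (active_neuron ns ls (Suc t) r)"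
proof -
  let ?A = "fst (ls ! t) (active_neuron ns ls (Suc t) r)" and ?h = "hidden \<rho> ns ls x t"
  have "(\<Sum>s<num_active ns ls t. fst (pruned_layer ns ls t) r s * y s)
      = (\<Sum>s<num_active ns ls t. ?A (active_neuron ns ls t s) * ?h (active_neuron ns ls t s))"
    using assms(3) y unfolding pruned_layer_def by (intro sum.cong) auto
  also have "\<dots> = (\<Sum>j\<in>active_neurons ns ls t. ?A j * ?h j)"
    by (rule sum.reindex_bij_betw[OF bij_betw_active_neuron])
  also have "\<dots> = (\<Sum>j<ns ! t. ?A j * ?h j)"
  proof (cases "t = 0")
    case True
    then show ?thesis by (simp add: active_neurons_boundary)
  next
    case False
    then show ?thesis
      using active_neurons_subset hidden_inactive[where \<rho>=\<rho>, OF assms(1) _ assms(2)]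
      by (intro sum.mono_neutral_left) auto
  qed
  finally show ?thesis
    using assms(3) active_neuron_less[OF assms(3)] unfolding affine_def pruned_layer_def by simp
qed

lemma hidden_pruned:
  assumes "\<rho> 0 = 0" "t < length ls" "r < num_active ns ls t"
  shows "hidden \<rho> (pruned_widths ns ls) (pruned_layers ns ls) x t r
       = hidden \<rho> ns ls x t (active_neuron ns ls t r)"
  using assms(2,3)
proof (induction t arbitrary: r)
  case 0
  then show ?case by (simp add: active_neuron_boundary num_active_boundary)
next
  case (Suc t)
  have "hidden \<rho> (pruned_widths ns ls) (pruned_layers ns ls) x (Suc t) r =
      act_layer \<rho> (num_active ns ls (Suc t)) (num_active ns ls t) (pruned_layer ns ls t)
        (hidden \<rho> (pruned_widths ns ls) (pruned_layers ns ls) x t) r"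
    using Suc.prems by (simp add: nth_pruned_widths nth_pruned_layers)
  also have "\<dots> = \<rho> (affine (ns ! Suc t) (ns ! t) (ls ! t) (hidden \<rho> ns ls x t)
                            (active_neuron ns ls (Suc t) r))"
    using affine_pruned_layer[where \<rho>=\<rho>, OF assms(1) _ Suc.prems(2)] Suc by (simp add: act_layer_def)
  also have "\<dots> = hidden \<rho> ns ls x (Suc t) (active_neuron ns ls (Suc t) r)"
    using active_neuron_less[OF Suc.prems(2)] by (simp add: act_layer_def)
  finally show ?case .
qed

lemma realize_pruned:
  assumes "\<rho> 0 = 0" "length ns = length ls + 1" "length ls \<ge> 1" "ns ! length ls \<ge> 1"
  shows "realize \<rho> (pruned_widths ns ls) (pruned_layers ns ls) x 0 = realize \<rho> ns ls x 0"
proof -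
  define t where "t = length ls - 1"
  have t: "t < length ls" "Suc t = length ls" using assms(3) unfolding t_def by auto
  have "realize \<rho> (pruned_widths ns ls) (pruned_layers ns ls) x 0 =
      affine (num_active ns ls (Suc t)) (num_active ns ls t) (pruned_layer ns ls t)
        (hidden \<rho> (pruned_widths ns ls) (pruned_layers ns ls) x t) 0"
    using realize_eq_affine_hidden[of "pruned_widths ns ls" "pruned_layers ns ls"] t
    by (simp add: length_pruned_widths length_pruned_layers nth_pruned_widths nth_pruned_layers
        t_def del: hidden.simps)
  also have "\<dots> = affine (ns ! Suc t) (ns ! t) (ls ! t) (hidden \<rho> ns ls x t)
                     (active_neuron ns ls (Suc t) 0)"
    using t assms(4) hidden_pruned[where \<rho>=\<rho>, OF assms(1) t(1)]
    by (intro affine_pruned_layer[where \<rho>=\<rho>, OF assms(1) t(1)]) (auto simp: num_active_boundary)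
  also have "\<dots> = realize \<rho> ns ls x 0"
    using realize_eq_affine_hidden[OF assms(2,3)] t assms(4)
    by (simp add: active_neuron_boundary t_def del: hidden.simps)
  finally show ?thesis .
qed

lemma layer_weights_pruned_le:
  assumes "t < length ls"
  shows "layer_weights (pruned_widths ns ls) (pruned_layers ns ls) t \<le> layer_weights ns ls t"
proof -
  let ?f = "\<lambda>(r, s). (active_neuron ns ls (Suc t) r, active_neuron ns ls t s)"
  have "card {(r, s). r < num_active ns ls (Suc t) \<and> s < num_active ns ls t \<and>
                      fst (pruned_layer ns ls t) r s \<noteq> 0}
      \<le> card {(i, j). i < ns ! Suc t \<and> j < ns ! t \<and> fst (ls ! t) i j \<noteq> 0}"
  proof (rule card_inj_on_le[of ?f])
    show "inj_on ?f {(r, s). r < num_active ns ls (Suc t) \<and> s < num_active ns ls t \<and>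
                             fst (pruned_layer ns ls t) r s \<noteq> 0}"
      using inj_on_active_neuron[of ns ls "Suc t"] inj_on_active_neuron[of ns ls t]
      unfolding inj_on_def by auto
  qed (use active_neuron_less in \<open>auto simp: pruned_layer_def finite_index_pairs\<close>)
  moreover have "card {r. r < num_active ns ls (Suc t) \<and> snd (pruned_layer ns ls t) r \<noteq> 0}
      \<le> card {i. i < ns ! Suc t \<and> snd (ls ! t) i \<noteq> 0}"
  proof (rule card_inj_on_le[of "active_neuron ns ls (Suc t)"])
    show "inj_on (active_neuron ns ls (Suc t))
            {r. r < num_active ns ls (Suc t) \<and> snd (pruned_layer ns ls t) r \<noteq> 0}"
      using inj_on_active_neuron[of ns ls "Suc t"] unfolding inj_on_def by auto
  qed (use active_neuron_less in \<open>auto simp: pruned_layer_def\<close>)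
  ultimately show ?thesis
    using assms by (simp add: layer_weights_def nth_pruned_widths nth_pruned_layers)
qed

lemma num_weights_pruned_le: "num_weights (pruned_widths ns ls) (pruned_layers ns ls) \<le> num_weights ns ls"
  unfolding num_weights_eq_sum_layer_weights length_pruned_layers
  by (intro sum_mono layer_weights_pruned_le) simp

lemma num_active_le_layer_weights:
  assumes "0 < t" "t < length ls"
  shows "num_active ns ls t \<le> layer_weights ns ls (t - 1)"
proof -
  obtain t' where t': "t = Suc t'" using assms(1) by (cases t) auto
  let ?A = "{(i, j). i < ns ! Suc t' \<and> j < ns ! t' \<and> fst (ls ! t') i j \<noteq> 0}"
  let ?B = "{i. i < ns ! Suc t' \<and> snd (ls ! t') i \<noteq> 0}"
  have "active_neurons ns ls t \<subseteq> fst ` ?A \<union> ?B"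
    unfolding active_neurons_def t' using assms by (auto simp: t' image_iff; blast)
  then have "num_active ns ls t \<le> card (fst ` ?A \<union> ?B)"
    unfolding num_active_def by (intro card_mono) (auto intro: finite_index_pairs)
  also have "\<dots> \<le> card (fst ` ?A) + card ?B" by (rule card_Un_le)
  also have "\<dots> \<le> card ?A + card ?B" using card_image_le[OF finite_index_pairs] by simp
  finally show ?thesis unfolding layer_weights_def t' by simp
qed

section \<open>Normal form of networks\<close>

text \<open>Canonical networks are determined by their widths and their nonzero entries.\<close>

definition canonical_net :: "nat list \<Rightarrow> layer list \<Rightarrow> bool" where
  "canonical_net ns ls \<longleftrightarrow> (\<forall>t<length ls.
      (\<forall>r s. \<not> (r < ns ! Suc t \<and> s < ns ! t) \<longrightarrow> fst (ls ! t) r s = 0) \<and>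
      (\<forall>r. \<not> r < ns ! Suc t \<longrightarrow> snd (ls ! t) r = 0))"

definition canonical_nets :: "nat \<Rightarrow> nat \<Rightarrow> nat \<Rightarrow> (nat list \<times> layer list) set" where
  "canonical_nets \<sigma> d W = {(ns, ls). length ls \<le> W + 2 \<and> length ns = length ls + 1 \<and>
      set ns \<subseteq> {..d + W} \<and> canonical_net ns ls \<and> quantized \<sigma> W ns ls \<and> num_weights ns ls \<le> W}"

lemma canonical_net_pruned: "canonical_net (pruned_widths ns ls) (pruned_layers ns ls)"
  unfolding canonical_net_def
  by (auto simp: length_pruned_layers nth_pruned_layers nth_pruned_widths pruned_layer_def)

lemma quantized_pruned:
  assumes "quantized \<sigma> W ns ls"
  shows "quantized \<sigma> W (pruned_widths ns ls) (pruned_layers ns ls)"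
  using assms active_neuron_less unfolding quantized_def
  by (auto simp: length_pruned_layers nth_pruned_widths nth_pruned_layers pruned_layer_def)

lemma network_normal_form:
  assumes "\<rho> 0 = 0" "valid_net d ns ls" "quantized \<sigma> W ns ls" "num_weights ns ls \<le> W" "1 \<le> d"
  shows "\<exists>(ns', ls') \<in> canonical_nets \<sigma> d W. \<forall>x. realize \<rho> ns' ls' x 0 = realize \<rho> ns ls x 0"
proof -
  obtain ns1 ls1 where 1: "valid_net d ns1 ls1" "quantized \<sigma> W ns1 ls1" "num_weights ns1 ls1 \<le> W"
     "length ls1 \<le> W + 2" "\<forall>x. realize \<rho> ns1 ls1 x = realize \<rho> ns ls x"
    using reduce_depth[where \<rho>=\<rho>, OF assms(1-3)] assms(4) by fastforce
  have len: "length ns1 = length ls1 + 1" "length ls1 \<ge> 1"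
    using 1(1) unfolding valid_net_def by auto
  have "ns1 \<noteq> []" using len by auto
  then have "ns1 ! 0 = hd ns1" "ns1 ! length ls1 = last ns1"
    using len by (simp_all add: hd_conv_nth last_conv_nth)
  then have ends: "ns1 ! 0 = d" "ns1 ! length ls1 = 1"
    using 1(1) unfolding valid_net_def by simp_all
  have "set (pruned_widths ns1 ls1) \<subseteq> {..d + W}"
  proof
    fix w assume "w \<in> set (pruned_widths ns1 ls1)"
    then obtain t where t: "t \<le> length ls1" "w = num_active ns1 ls1 t"
      unfolding pruned_widths_def by (auto simp del: upt_Suc simp: less_Suc_eq_le)
    show "w \<in> {..d + W}"
    proof (cases "t = 0 \<or> t = length ls1")
      case True
      then show ?thesis using t ends num_active_boundary[OF True] assms(5) by auto
    next
      case False
      then have "w \<le> layer_weights ns1 ls1 (t - 1)" using t num_active_le_layer_weights by auto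
      also have "\<dots> \<le> num_weights ns1 ls1" using t False by (intro layer_weights_le_num_weights) auto
      finally show ?thesis using 1(3) by simp
    qed
  qed
  then have "(pruned_widths ns1 ls1, pruned_layers ns1 ls1) \<in> canonical_nets \<sigma> d W"
    unfolding canonical_nets_def
    using 1 canonical_net_pruned quantized_pruned num_weights_pruned_le[of ns1 ls1]
    by (auto simp: length_pruned_widths length_pruned_layers)
  moreover have "realize \<rho> (pruned_widths ns1 ls1) (pruned_layers ns1 ls1) x 0 = realize \<rho> ns ls x 0"
    for x using realize_pruned[where \<rho>=\<rho>, OF assms(1) len] ends 1(5) by simp
  ultimately show ?thesis by blast
qed

definition ceil_log2 :: "nat \<Rightarrow> nat" where
  "ceil_log2 W = nat \<lceil>log 2 (real W)\<rceil>"

lemma qgrid_iff: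
  "qgrid \<sigma> W a \<longleftrightarrow>
     \<bar>a\<bar> \<le> real W ^ (\<sigma> * ceil_log2 W) \<and> a * 2 ^ (\<sigma> * (ceil_log2 W)\<^sup>2) \<in> \<int>"
  unfolding qgrid_def ceil_log2_def Let_def ..

lemma ceil_log2_mono: "1 \<le> W' \<Longrightarrow> W' \<le> W \<Longrightarrow> ceil_log2 W' \<le> ceil_log2 W"
  unfolding ceil_log2_def by (intro nat_mono ceiling_mono) auto

lemma le_two_power_ceil_log2:
  assumes "1 \<le> W"
  shows "W \<le> 2 ^ ceil_log2 W"
proof -
  have "log 2 (real W) \<le> real (ceil_log2 W)"
    using assms unfolding ceil_log2_def by linarith
  then have "real W \<le> 2 powr real (ceil_log2 W)"
    using assms by (simp add: log_le_iff)
  then show ?thesis by (simp add: powr_realpow flip: of_nat_le_iff)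
qed

lemma ceil_log2_le:
  assumes "1 \<le> W"
  shows "real (ceil_log2 W) \<le> log 2 (real W) + 1"
proof -
  have "real (ceil_log2 W) = of_int \<lceil>log 2 (real W)\<rceil>"
    using assms unfolding ceil_log2_def by simp
  then show ?thesis by linarith
qed

lemma qgrid_mono:
  assumes "1 \<le> W'" "W' \<le> W" "qgrid \<sigma> W' a"
  shows "qgrid \<sigma> W a"
proof -
  let ?k = "ceil_log2 W" and ?k' = "ceil_log2 W'"
  have k: "?k' \<le> ?k" by (rule ceil_log2_mono[OF assms(1,2)])
  have "\<bar>a\<bar> \<le> real W' ^ (\<sigma> * ?k')" using assms(3) unfolding qgrid_iff by simp
  also have "\<dots> \<le> real W ^ (\<sigma> * ?k')" using assms(2) by (intro power_mono) auto
  also have "\<dots> \<le> real W ^ (\<sigma> * ?k)" using assms(1,2) k by (intro power_increasing) auto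
  finally have bound: "\<bar>a\<bar> \<le> real W ^ (\<sigma> * ?k)" .
  have "\<sigma> * ?k\<^sup>2 = \<sigma> * ?k'\<^sup>2 + (\<sigma> * ?k\<^sup>2 - \<sigma> * ?k'\<^sup>2)"
    using k by (simp add: power_mono)
  then have "a * 2 ^ (\<sigma> * ?k\<^sup>2) = (a * 2 ^ (\<sigma> * ?k'\<^sup>2)) * 2 ^ (\<sigma> * ?k\<^sup>2 - \<sigma> * ?k'\<^sup>2)"
    by (metis power_add mult.assoc)
  also have "\<dots> \<in> \<int>" by (rule Ints_mult) (use assms(3) in \<open>auto simp: qgrid_iff\<close>)
  finally show ?thesis using bound unfolding qgrid_iff by simp
qed

lemma quantized_mono:
  assumes "1 \<le> W'" "W' \<le> W" "quantized \<sigma> W' ns ls"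
  shows "quantized \<sigma> W ns ls"
  using assms(3) qgrid_mono[OF assms(1,2)] unfolding quantized_def by blast

definition grid_bound :: "nat \<Rightarrow> nat \<Rightarrow> nat" where
  "grid_bound \<sigma> W = W ^ (\<sigma> * ceil_log2 W) * 2 ^ (\<sigma> * (ceil_log2 W)\<^sup>2)"

definition grid_points :: "nat \<Rightarrow> nat \<Rightarrow> real set" where
  "grid_points \<sigma> W = {a. qgrid \<sigma> W a}"

lemma grid_points_subset:
  "grid_points \<sigma> W \<subseteq> (\<lambda>z. real_of_int z / 2 ^ (\<sigma> * (ceil_log2 W)\<^sup>2)) `
     {- int (grid_bound \<sigma> W)..int (grid_bound \<sigma> W)}"
proof
  fix a assume "a \<in> grid_points \<sigma> W"
  then have a: "\<bar>a\<bar> \<le> real W ^ (\<sigma> * ceil_log2 W)" "a * 2 ^ (\<sigma> * (ceil_log2 W)\<^sup>2) \<in> \<int>"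
    unfolding grid_points_def qgrid_iff by auto
  obtain z where z: "a * 2 ^ (\<sigma> * (ceil_log2 W)\<^sup>2) = real_of_int z" using a(2) Ints_cases by blast
  have "\<bar>real_of_int z\<bar> = \<bar>a\<bar> * 2 ^ (\<sigma> * (ceil_log2 W)\<^sup>2)"
    unfolding z[symmetric] by (simp add: abs_mult)
  also have "\<dots> \<le> real W ^ (\<sigma> * ceil_log2 W) * 2 ^ (\<sigma> * (ceil_log2 W)\<^sup>2)"
    using a(1) by (intro mult_right_mono) auto
  also have "\<dots> = real (grid_bound \<sigma> W)" unfolding grid_bound_def by simp
  finally have "\<bar>z\<bar> \<le> int (grid_bound \<sigma> W)" by linarith
  moreover have "a = real_of_int z / 2 ^ (\<sigma> * (ceil_log2 W)\<^sup>2)" using z by (simp add: field_simps)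
  ultimately show "a \<in> (\<lambda>z. real_of_int z / 2 ^ (\<sigma> * (ceil_log2 W)\<^sup>2)) `
      {- int (grid_bound \<sigma> W)..int (grid_bound \<sigma> W)}"
    by (intro image_eqI[where x = z]) auto
qed

lemma finite_grid_points: "finite (grid_points \<sigma> W)"
  using grid_points_subset finite_subset by blast

lemma card_grid_points_le: "card (grid_points \<sigma> W) \<le> 2 * grid_bound \<sigma> W + 1"
proof -
  have "card (grid_points \<sigma> W) \<le> card {- int (grid_bound \<sigma> W)..int (grid_bound \<sigma> W)}"
    using card_mono[OF _ grid_points_subset] card_image_le order_trans by blast
  then show ?thesis by simp
qed

lemma grid_bound_le: "1 \<le> W \<Longrightarrow> grid_bound \<sigma> W \<le> 4 ^ (\<sigma> * (ceil_log2 W)\<^sup>2)"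
proof -
  assume "1 \<le> W"
  then have "W ^ (\<sigma> * ceil_log2 W) \<le> (2 ^ ceil_log2 W) ^ (\<sigma> * ceil_log2 W)"
    using le_two_power_ceil_log2 by (intro power_mono) auto
  also have "\<dots> = 2 ^ (\<sigma> * (ceil_log2 W)\<^sup>2)"
    by (simp add: power_mult[symmetric] power2_eq_square ac_simps)
  finally have "grid_bound \<sigma> W \<le> 2 ^ (\<sigma> * (ceil_log2 W)\<^sup>2) * 2 ^ (\<sigma> * (ceil_log2 W)\<^sup>2)"
    unfolding grid_bound_def by simp
  also have "\<dots> = 4 ^ (\<sigma> * (ceil_log2 W)\<^sup>2)" by (simp add: power_mult_distrib[symmetric])
  finally show ?thesis .
qed

section \<open>Counting canonical networks\<close>

lemma sum_powers_le_Suc_power: "(\<Sum>i\<le>m. b ^ i) \<le> (b + 1 :: nat) ^ m"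
proof -
  have "(\<Sum>i\<le>m. b ^ i) \<le> (\<Sum>i\<le>m. (m choose i) * b ^ i)"
    by (intro sum_mono) (simp add: Suc_leI)
  also have "\<dots> = (b + 1) ^ m" using binomial_ring[of b 1 m] by simp
  finally show ?thesis .
qed

lemma card_subsets_card_le:
  assumes "finite U"
  shows "card {A. A \<subseteq> U \<and> card A \<le> k} \<le> (card U + 1) ^ k"
proof -
  have "{A. A \<subseteq> U \<and> card A \<le> k} = (\<Union>s\<le>k. {A. A \<subseteq> U \<and> card A = s})" by auto
  then have "card {A. A \<subseteq> U \<and> card A \<le> k} \<le> (\<Sum>s\<le>k. card {A. A \<subseteq> U \<and> card A = s})"
    using card_UN_le[of "{..k}" "\<lambda>s. {A. A \<subseteq> U \<and> card A = s}"] by simp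
  also have "\<dots> = (\<Sum>s\<le>k. card U choose s)" using n_subsets[OF assms] by simp
  also have "\<dots> \<le> (\<Sum>s\<le>k. card U ^ s)"
    by (intro sum_mono) (metis binomial_eq_0 binomial_le_pow not_le zero_le)
  also have "\<dots> \<le> (card U + 1) ^ k" by (rule sum_powers_le_Suc_power)
  finally show ?thesis .
qed

text \<open>Entries are recorded as (layer, row, column or \<open>None\<close> for the bias, value).\<close>

definition net_entries :: "nat list \<Rightarrow> layer list \<Rightarrow> (nat \<times> nat \<times> nat option \<times> real) set" where
  "net_entries ns ls = (\<Union>t<length ls.
     (\<lambda>(i, j). (t, i, Some j, fst (ls ! t) i j)) `
       {(i, j). i < ns ! Suc t \<and> j < ns ! t \<and> fst (ls ! t) i j \<noteq> 0}
     \<union> (\<lambda>i. (t, i, None, snd (ls ! t) i)) ` {i. i < ns ! Suc t \<and> snd (ls ! t) i \<noteq> 0})"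

lemma card_net_entries_le: "card (net_entries ns ls) \<le> num_weights ns ls"
proof -
  let ?E = "\<lambda>t. (\<lambda>(i, j). (t, i, Some j, fst (ls ! t) i j)) `
              {(i, j). i < ns ! Suc t \<and> j < ns ! t \<and> fst (ls ! t) i j \<noteq> 0}"
  let ?B = "\<lambda>t. (\<lambda>i. (t, i, None :: nat option, snd (ls ! t) i)) `
              {i. i < ns ! Suc t \<and> snd (ls ! t) i \<noteq> 0}"
  have "card (net_entries ns ls) \<le> (\<Sum>t<length ls. card (?E t \<union> ?B t))"
    unfolding net_entries_def by (rule card_UN_le) simp
  also have "\<dots> \<le> (\<Sum>t<length ls. layer_weights ns ls t)"
  proof (rule sum_mono)
    fix t
    have "card (?E t \<union> ?B t) \<le> card (?E t) + card (?B t)" by (rule card_Un_le)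
    also have "\<dots> \<le> layer_weights ns ls t" unfolding layer_weights_def
      by (intro add_mono card_image_le) (auto intro: finite_index_pairs)
    finally show "card (?E t \<union> ?B t) \<le> layer_weights ns ls t" .
  qed
  finally show ?thesis unfolding num_weights_eq_sum_layer_weights .
qed

lemma net_entries_weight_iff:
  assumes "canonical_net ns ls" "t < length ls"
  shows "(t, i, Some j, v) \<in> net_entries ns ls \<longleftrightarrow> v \<noteq> 0 \<and> v = fst (ls ! t) i j"
proof -
  have "fst (ls ! t) i j \<noteq> 0 \<Longrightarrow> i < ns ! Suc t \<and> j < ns ! t"
    using assms unfolding canonical_net_def by blast
  moreover have "(t, i, Some j, v) \<in> net_entries ns ls \<longleftrightarrow>
      t < length ls \<and> i < ns ! Suc t \<and> j < ns ! t \<and> fst (ls ! t) i j \<noteq> 0 \<and> v = fst (ls ! t) i j"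
    unfolding net_entries_def by auto
  ultimately show ?thesis using assms(2) by auto
qed

lemma net_entries_bias_iff:
  assumes "canonical_net ns ls" "t < length ls"
  shows "(t, i, None, v) \<in> net_entries ns ls \<longleftrightarrow> v \<noteq> 0 \<and> v = snd (ls ! t) i"
proof -
  have "snd (ls ! t) i \<noteq> 0 \<Longrightarrow> i < ns ! Suc t"
    using assms unfolding canonical_net_def by blast
  moreover have "(t, i, None, v) \<in> net_entries ns ls \<longleftrightarrow>
      t < length ls \<and> i < ns ! Suc t \<and> snd (ls ! t) i \<noteq> 0 \<and> v = snd (ls ! t) i"
    unfolding net_entries_def by auto
  ultimately show ?thesis using assms(2) by auto
qed

lemma net_entries_inj:
  assumes "canonical_net ns ls1" "canonical_net ns ls2" "length ls1 = length ls2"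
    and "net_entries ns ls1 = net_entries ns ls2"
  shows "ls1 = ls2"
proof (rule nth_equalityI[OF assms(3)])
  fix t assume t: "t < length ls1"
  have same_nonzero: "a = b" if "\<And>v::real. v \<noteq> 0 \<and> v = a \<longleftrightarrow> v \<noteq> 0 \<and> v = b" for a b
    using that[of a] that[of b] by metis
  have "fst (ls1 ! t) i j = fst (ls2 ! t) i j" for i j
    using net_entries_weight_iff[OF assms(1) t, of i j] net_entries_weight_iff[OF assms(2), of t i j]
      assms(3,4) t by (intro same_nonzero) simp
  moreover have "snd (ls1 ! t) i = snd (ls2 ! t) i" for i
    using net_entries_bias_iff[OF assms(1) t, of i] net_entries_bias_iff[OF assms(2), of t i]
      assms(3,4) t by (intro same_nonzero) simp
  ultimately show "ls1 ! t = ls2 ! t" by (simp add: prod_eq_iff ext)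
qed

definition entry_space :: "nat \<Rightarrow> nat \<Rightarrow> nat \<Rightarrow> (nat \<times> nat \<times> nat option \<times> real) set" where
  "entry_space \<sigma> d W =
     {..<W + 2} \<times> {..<d + W + 1} \<times> insert None (Some ` {..<d + W + 1}) \<times> grid_points \<sigma> W"

lemma finite_entry_space: "finite (entry_space \<sigma> d W)"
  unfolding entry_space_def using finite_grid_points by auto

lemma card_entry_space_le:
  "card (entry_space \<sigma> d W) \<le> (W + 2) * (d + W + 1) * (d + W + 2) * (2 * grid_bound \<sigma> W + 1)"
proof -
  have "card (insert None (Some ` {..<d + W + 1})) = d + W + 2"
    by (subst card_insert_disjoint) (auto simp: card_image)
  then have "card (entry_space \<sigma> d W) = (W + 2) * ((d + W + 1) * ((d + W + 2) * card (grid_points \<sigma> W)))"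
    unfolding entry_space_def by (simp add: card_cartesian_product)
  also have "\<dots> \<le> (W + 2) * ((d + W + 1) * ((d + W + 2) * (2 * grid_bound \<sigma> W + 1)))"
    using card_grid_points_le by (intro mult_le_mono2)
  finally show ?thesis by (simp only: mult.assoc)
qed

lemma net_entries_subset:
  assumes "(ns, ls) \<in> canonical_nets \<sigma> d W"
  shows "net_entries ns ls \<subseteq> entry_space \<sigma> d W"
proof
  fix e assume e: "e \<in> net_entries ns ls"
  have L: "length ls \<le> W + 2" "length ns = length ls + 1" "set ns \<subseteq> {..d + W}" "quantized \<sigma> W ns ls"
    using assms unfolding canonical_nets_def by auto
  from e obtain t where t: "t < length ls" and
    "e \<in> (\<lambda>(i, j). (t, i, Some j, fst (ls ! t) i j)) `
           {(i, j). i < ns ! Suc t \<and> j < ns ! t \<and> fst (ls ! t) i j \<noteq> 0}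
       \<union> (\<lambda>i. (t, i, None, snd (ls ! t) i)) ` {i. i < ns ! Suc t \<and> snd (ls ! t) i \<noteq> 0}"
    unfolding net_entries_def by blast
  moreover have "ns ! Suc t \<le> d + W" "ns ! t \<le> d + W"
    using L(2,3) t by (auto simp: subset_iff)
  moreover have "\<forall>i j. i < ns ! Suc t \<and> j < ns ! t \<longrightarrow> qgrid \<sigma> W (fst (ls ! t) i j)"
     "\<forall>i. i < ns ! Suc t \<longrightarrow> qgrid \<sigma> W (snd (ls ! t) i)"
    using L(4) t unfolding quantized_def by auto
  ultimately show "e \<in> entry_space \<sigma> d W"
    using L(1) unfolding entry_space_def grid_points_def by auto
qed

definition width_lists :: "nat \<Rightarrow> nat \<Rightarrow> nat list set" where
  "width_lists d W = {xs. set xs \<subseteq> {..d + W} \<and> length xs \<le> W + 3}"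

definition entry_sets :: "nat \<Rightarrow> nat \<Rightarrow> nat \<Rightarrow> (nat \<times> nat \<times> nat option \<times> real) set set" where
  "entry_sets \<sigma> d W = {A. A \<subseteq> entry_space \<sigma> d W \<and> card A \<le> W}"

lemma card_canonical_nets_le_product:
  "finite (canonical_nets \<sigma> d W) \<and>
   card (canonical_nets \<sigma> d W) \<le> card (width_lists d W) * card (entry_sets \<sigma> d W)"
proof -
  let ?f = "\<lambda>(ns, ls). (ns, net_entries ns ls)"
  have inj: "inj_on ?f (canonical_nets \<sigma> d W)"
  proof (rule inj_onI)
    fix x y assume "x \<in> canonical_nets \<sigma> d W" "y \<in> canonical_nets \<sigma> d W" "?f x = ?f y"
    moreover obtain ns1 ls1 ns2 ls2 where "x = (ns1, ls1)" "y = (ns2, ls2)" by fastforce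
    ultimately show "x = y"
      using net_entries_inj[of ns1 ls1 ls2] unfolding canonical_nets_def by auto
  qed
  have sub: "?f ` canonical_nets \<sigma> d W \<subseteq> width_lists d W \<times> entry_sets \<sigma> d W"
  proof
    fix z assume "z \<in> ?f ` canonical_nets \<sigma> d W"
    then obtain ns ls where m: "(ns, ls) \<in> canonical_nets \<sigma> d W" "z = (ns, net_entries ns ls)"
      by auto
    then show "z \<in> width_lists d W \<times> entry_sets \<sigma> d W"
      using net_entries_subset[OF m(1)] card_net_entries_le[of ns ls]
      unfolding canonical_nets_def width_lists_def entry_sets_def by auto
  qed
  have "finite (width_lists d W)" unfolding width_lists_def by (rule finite_lists_length_le) simp
  moreover have "finite (entry_sets \<sigma> d W)" unfolding entry_sets_def
    by (rule finite_subset[of _ "Pow (entry_space \<sigma> d W)"]) (use finite_entry_space in auto)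
  ultimately have fin: "finite (width_lists d W \<times> entry_sets \<sigma> d W)" by simp
  show ?thesis
    using finite_imageD[OF finite_subset[OF sub fin] inj] card_inj_on_le[OF inj sub fin]
    by (simp add: card_cartesian_product)
qed

definition count_bound :: "nat \<Rightarrow> nat \<Rightarrow> nat \<Rightarrow> nat" where
  "count_bound \<sigma> d W = (\<Sum>i\<le>W + 3. (d + W + 1) ^ i) *
     ((W + 2) * (d + W + 1) * (d + W + 2) * (2 * grid_bound \<sigma> W + 1) + 1) ^ W"

lemma card_canonical_nets_le:
  "finite (canonical_nets \<sigma> d W) \<and> card (canonical_nets \<sigma> d W) \<le> count_bound \<sigma> d W"
proof -
  have "card (width_lists d W) = (\<Sum>i\<le>W + 3. (d + W + 1) ^ i)"
    unfolding width_lists_def by (subst card_lists_length_le) auto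
  moreover have "card (entry_sets \<sigma> d W) \<le> (card (entry_space \<sigma> d W) + 1) ^ W"
    unfolding entry_sets_def by (rule card_subsets_card_le[OF finite_entry_space])
  moreover have "\<dots> \<le> ((W + 2) * (d + W + 1) * (d + W + 2) * (2 * grid_bound \<sigma> W + 1) + 1) ^ W"
    using card_entry_space_le by (intro power_mono) auto
  ultimately have "card (width_lists d W) * card (entry_sets \<sigma> d W) \<le> count_bound \<sigma> d W"
    unfolding count_bound_def by (metis le_trans mult_le_mono2)
  then show ?thesis using card_canonical_nets_le_product[of \<sigma> d W] by linarith
qed

definition canonical_functions :: "(real \<Rightarrow> real) \<Rightarrow> nat \<Rightarrow> nat \<Rightarrow> nat \<Rightarrow> ((nat \<Rightarrow> real) \<Rightarrow> real) set" where
  "canonical_functions \<rho> \<sigma> d W = (\<lambda>(ns, ls) x. realize \<rho> ns ls x 0) ` canonical_nets \<sigma> d W"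

lemma card_canonical_functions_le:
  "finite (canonical_functions \<rho> \<sigma> d W) \<and> card (canonical_functions \<rho> \<sigma> d W) \<le> count_bound \<sigma> d W"
  using card_canonical_nets_le[of \<sigma> d W] card_image_le[of "canonical_nets \<sigma> d W"]
  unfolding canonical_functions_def by (meson finite_imageI le_trans)

lemma NN_subset_canonical_functions:
  assumes "\<rho> 0 = 0" "1 \<le> d" "1 \<le> W'" "W' \<le> W"
  shows "NN \<sigma> \<rho> d W' \<subseteq> canonical_functions \<rho> \<sigma> d W"
proof
  fix g assume "g \<in> NN \<sigma> \<rho> d W'"
  then obtain ns ls where g: "g = (\<lambda>x. realize \<rho> ns ls x 0)" "valid_net d ns ls"
      "quantized \<sigma> W ns ls" "num_weights ns ls \<le> W"
    unfolding NN_def using quantized_mono[OF assms(3,4)] assms(4) by force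
  obtain ns' ls' where "(ns', ls') \<in> canonical_nets \<sigma> d W" "\<forall>x. realize \<rho> ns' ls' x 0 = g x"
    using network_normal_form[where \<rho>=\<rho>, OF assms(1) g(2-4) assms(2)] g(1) by auto
  then show "g \<in> canonical_functions \<rho> \<sigma> d W"
    unfolding canonical_functions_def by (auto intro!: image_eqI[of _ _ "(ns', ls')"])
qed

lemma count_bound_le:
  fixes d W :: nat
  assumes "1 \<le> W"
  defines "X \<equiv> d + W + 4"
  shows "1 + count_bound \<sigma> d W \<le> 2 * X ^ X * (X ^ 3 * 4 ^ (\<sigma> * (ceil_log2 W)\<^sup>2 + 1)) ^ W"
proof -
  define P where "P = (W + 2) * (d + W + 1) * (d + W + 2)"
  define e where "e = \<sigma> * (ceil_log2 W)\<^sup>2"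
  have "(\<Sum>i\<le>W + 3. (d + W + 1) ^ i) \<le> (d + W + 2) ^ (W + 3)"
    using sum_powers_le_Suc_power[of "d + W + 1" "W + 3"] by simp
  also have "\<dots> \<le> X ^ (W + 3)" unfolding X_def by (intro power_mono) auto
  also have "\<dots> \<le> X ^ X" unfolding X_def by (intro power_increasing) auto
  finally have widths: "(\<Sum>i\<le>W + 3. (d + W + 1) ^ i) \<le> X ^ X" .
  have "P \<le> X ^ 3" unfolding P_def X_def power3_eq_cube by (intro mult_le_mono) auto
  moreover have "2 * grid_bound \<sigma> W + 2 \<le> 4 * 4 ^ e"
    using grid_bound_le[OF assms(1), of \<sigma>] one_le_power[of "4::nat" e] unfolding e_def by linarith
  ultimately have "P * (2 * grid_bound \<sigma> W + 2) \<le> X ^ 3 * (4 * 4 ^ e)"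
    by (rule mult_le_mono)
  then have "P * (2 * grid_bound \<sigma> W + 2) \<le> X ^ 3 * 4 ^ (e + 1)" by simp
  moreover have "P * (2 * grid_bound \<sigma> W + 1) + 1 \<le> P * (2 * grid_bound \<sigma> W + 2)"
    unfolding P_def by simp
  ultimately have entries: "P * (2 * grid_bound \<sigma> W + 1) + 1 \<le> X ^ 3 * 4 ^ (e + 1)" by linarith
  have "count_bound \<sigma> d W \<le> X ^ X * (X ^ 3 * 4 ^ (e + 1)) ^ W"
    unfolding count_bound_def P_def[symmetric] using widths entries by (intro mult_le_mono power_mono) simp_all
  moreover have "1 \<le> X ^ X * (X ^ 3 * 4 ^ (e + 1)) ^ W"
    unfolding X_def by (simp add: one_le_power)
  ultimately show ?thesis unfolding e_def by linarith
qed

definition log_count_majorant :: "nat \<Rightarrow> real \<Rightarrow> real" where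
  "log_count_majorant \<sigma> x = ln 2 + x * ln x + x * (3 * ln x + (real \<sigma> * (log 2 x + 1)\<^sup>2 + 1) * ln 4)"

lemma ln_count_bound_le:
  assumes "1 \<le> W"
  shows "ln (real (1 + count_bound \<sigma> d W)) \<le> log_count_majorant \<sigma> (real (d + W + 4))"
proof -
  define X where "X = d + W + 4"
  define e where "e = \<sigma> * (ceil_log2 W)\<^sup>2 + 1"
  have X1: "1 \<le> real X" unfolding X_def by simp
  have "ln (real (1 + count_bound \<sigma> d W)) \<le> ln (real (2 * X ^ X * (X ^ 3 * 4 ^ e) ^ W))"
    using count_bound_le[OF assms, of \<sigma> d] unfolding X_def e_def
    by (subst ln_le_cancel_iff) (auto simp del: of_nat_add of_nat_mult of_nat_power)
  also have "\<dots> = ln 2 + real X * ln (real X) + real W * (3 * ln (real X) + real e * ln 4)"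
    using X1 by (simp add: ln_mult ln_realpow)
  also have "\<dots> \<le> log_count_majorant \<sigma> (real X)"
  proof -
    have "log 2 (real W) \<le> log 2 (real X)"
      using assms unfolding X_def by (subst log_le_cancel_iff) auto
    then have "real (ceil_log2 W) \<le> log 2 (real X) + 1"
      using ceil_log2_le[OF assms] by simp
    then have "real e \<le> real \<sigma> * (log 2 (real X) + 1)\<^sup>2 + 1"
      unfolding e_def by (simp add: mult_left_mono power_mono)
    then have "3 * ln (real X) + real e * ln 4
        \<le> 3 * ln (real X) + (real \<sigma> * (log 2 (real X) + 1)\<^sup>2 + 1) * ln 4"
      by (intro add_left_mono mult_right_mono) auto
    moreover have "0 \<le> 3 * ln (real X) + real e * ln 4" using X1 by simp
    moreover have "real W \<le> real X" unfolding X_def by simp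
    ultimately have "real W * (3 * ln (real X) + real e * ln 4)
       \<le> real X * (3 * ln (real X) + (real \<sigma> * (log 2 (real X) + 1)\<^sup>2 + 1) * ln 4)"
      by (intro mult_mono) auto
    then show ?thesis unfolding log_count_majorant_def by simp
  qed
  finally show ?thesis unfolding X_def .
qed

lemma log_count_majorant_mono:
  assumes "1 \<le> x" "x \<le> y"
  shows "log_count_majorant \<sigma> x \<le> log_count_majorant \<sigma> y"
proof -
  let ?g = "\<lambda>x. 3 * ln x + (real \<sigma> * (log 2 x + 1)\<^sup>2 + 1) * ln 4"
  have ln: "0 \<le> ln x" "ln x \<le> ln y" using assms by auto
  have "0 \<le> log 2 x + 1" "log 2 x + 1 \<le> log 2 y + 1" using assms by auto
  then have "(real \<sigma> * (log 2 x + 1)\<^sup>2 + 1) * ln 4 \<le> (real \<sigma> * (log 2 y + 1)\<^sup>2 + 1) * ln 4"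
    by (intro mult_right_mono add_right_mono mult_left_mono power_mono) auto
  then have "?g x \<le> ?g y" using ln by linarith
  moreover have "0 \<le> ?g x" using ln by simp
  ultimately have "x * ?g x \<le> y * ?g y" using assms by (intro mult_mono) auto
  moreover have "x * ln x \<le> y * ln y" using assms ln by (intro mult_mono) auto
  ultimately show ?thesis unfolding log_count_majorant_def by simp
qed

lemma log_count_majorant_sublinear:
  assumes "0 < \<eta>" "\<eta> < 1"
  shows "eventually (\<lambda>R. log_count_majorant \<sigma> (R powr (1 - \<eta>) + c) \<le> R * ln 2) at_top"
proof -
  have "((\<lambda>R. log_count_majorant \<sigma> (R powr (1 - \<eta>) + c) / R) \<longlongrightarrow> 0) at_top"
    unfolding log_count_majorant_def log_def using assms by real_asymp
  then have "eventually (\<lambda>R. log_count_majorant \<sigma> (R powr (1 - \<eta>) + c) / R < ln 2) at_top"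
    by (rule order_tendstoD) simp
  then show ?thesis
    using eventually_gt_at_top[of 0] by eventually_elim (auto simp: divide_less_eq mult.commute)
qed

lemma measurable_component_lebOm: "(\<lambda>y. y i) \<in> borel_measurable (lebOm d \<Omega>)"
proof -
  have "(\<lambda>y. y i) \<in> borel_measurable (lebd d)"
  proof (cases "i < d")
    case True
    then have "(\<lambda>y. y i) \<in> measurable (lebd d) lborel"
      unfolding lebd_def by (intro measurable_component_singleton) auto
    then show ?thesis by simp
  next
    case False
    then have "\<And>y. y \<in> space (lebd d) \<Longrightarrow> y i = undefined"
      unfolding lebd_def by (auto simp: space_PiM PiE_def extensional_def)
    then show ?thesis using measurable_cong[of "lebd d" "\<lambda>y. y i" "\<lambda>y. undefined"] by simp
  qed
  then show ?thesis unfolding lebOm_def by (rule measurable_restrict_space1)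
qed

lemma NN_measurable:
  assumes "\<rho> \<in> borel_measurable borel" "g \<in> NN \<sigma> \<rho> d W"
  shows "g \<in> borel_measurable (lebOm d \<Omega>)"
proof -
  obtain ns ls where "g = (\<lambda>x. realize \<rho> ns ls x 0)" "valid_net d ns ls"
    using assms(2) unfolding NN_def by blast
  then show ?thesis
    using measurable_realize[OF assms(1), of "\<lambda>y. y"] measurable_component_lebOm
    unfolding valid_net_def by auto
qed

lemma zero_in_L2: "(\<lambda>x. 0) \<in> L2 d \<Omega>"
  unfolding L2_def by simp

lemma L2_if_L2dist_sq_finite:
  assumes f: "f \<in> L2 d \<Omega>" and g: "g \<in> borel_measurable (lebOm d \<Omega>)"
    and dist: "L2dist_sq d \<Omega> f g < \<infinity>"
  shows "g \<in> L2 d \<Omega>"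
proof -
  have fm: "f \<in> borel_measurable (lebOm d \<Omega>)"
    and fi: "(\<integral>\<^sup>+ x. ennreal ((f x)\<^sup>2) \<partial>lebOm d \<Omega>) < \<infinity>"
    using f unfolding L2_def by auto
  have pointwise: "ennreal ((g x)\<^sup>2) \<le> 2 * ennreal ((f x)\<^sup>2) + 2 * ennreal ((f x - g x)\<^sup>2)" for x
  proof -
    have "(g x)\<^sup>2 \<le> 2 * (f x)\<^sup>2 + 2 * (f x - g x)\<^sup>2"
      using zero_le_power2[of "2 * f x - g x"] by (simp add: power2_eq_square algebra_simps)
    then have "ennreal ((g x)\<^sup>2) \<le> ennreal (2 * (f x)\<^sup>2 + 2 * (f x - g x)\<^sup>2)"
      by (rule ennreal_leI)
    also have "\<dots> = 2 * ennreal ((f x)\<^sup>2) + 2 * ennreal ((f x - g x)\<^sup>2)"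
      by (simp add: ennreal_plus ennreal_mult)
    finally show ?thesis .
  qed
  have "(\<integral>\<^sup>+ x. ennreal ((g x)\<^sup>2) \<partial>lebOm d \<Omega>)
      \<le> (\<integral>\<^sup>+ x. 2 * ennreal ((f x)\<^sup>2) + 2 * ennreal ((f x - g x)\<^sup>2) \<partial>lebOm d \<Omega>)"
    by (intro nn_integral_mono pointwise)
  also have "\<dots> = 2 * (\<integral>\<^sup>+ x. ennreal ((f x)\<^sup>2) \<partial>lebOm d \<Omega>) + 2 * L2dist_sq d \<Omega> f g"
    unfolding L2dist_sq_def using fm g by (simp add: nn_integral_add nn_integral_cmult)
  also have "\<dots> < \<infinity>" using fi dist by (simp add: ennreal_mult_less_top)
  finally show ?thesis using g unfolding L2_def by simp
qed

lemma L2dist_le_if_sq_le: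
  assumes "L2dist_sq d \<Omega> f g \<le> ennreal (\<epsilon>\<^sup>2)" "0 \<le> \<epsilon>"
  shows "L2dist d \<Omega> f g \<le> \<epsilon>"
proof -
  have "enn2real (L2dist_sq d \<Omega> f g) \<le> \<epsilon>\<^sup>2"
    using enn2real_mono[OF assms(1)] by simp
  then show ?thesis unfolding L2dist_def using assms(2) real_sqrt_le_mono[of _ "\<epsilon>\<^sup>2"] by fastforce
qed

lemma W_eps_attained:
  assumes "W_eps \<sigma> \<rho> d \<Omega> f \<epsilon> \<noteq> \<infinity>"
  obtains g where "1 \<le> the_enat (W_eps \<sigma> \<rho> d \<Omega> f \<epsilon>)"
    "g \<in> NN \<sigma> \<rho> d (the_enat (W_eps \<sigma> \<rho> d \<Omega> f \<epsilon>))" "L2dist_sq d \<Omega> f g \<le> ennreal (\<epsilon>\<^sup>2)"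
proof -
  define S where "S = {W. W \<ge> 1 \<and> (\<exists>g \<in> NN \<sigma> \<rho> d W. L2dist_sq d \<Omega> f g \<le> ennreal (\<epsilon>\<^sup>2))}"
  have W_eps: "W_eps \<sigma> \<rho> d \<Omega> f \<epsilon> = (INF W\<in>S. enat W)"
    unfolding W_eps_def S_def ..
  have "S \<noteq> {}" using assms unfolding W_eps by (auto simp: top_enat_def)
  then have "(LEAST W. W \<in> S) \<in> S" by (auto intro: LeastI)
  moreover have "(INF W\<in>S. enat W) = enat (LEAST W. W \<in> S)"
    using calculation by (intro antisym INF_lower INF_greatest) (auto intro: Least_le)
  ultimately show ?thesis using that unfolding W_eps S_def by auto
qed

section \<open>The codec\<close>

context
  fixes \<rho> :: "real \<Rightarrow> real" and \<sigma> d :: nat and \<Omega> :: "(nat \<Rightarrow> real) set"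
begin

text \<open>Realizations need not be square integrable on \<open>\<Omega>\<close>; only those that are enter the
  codebook, and the zero function keeps it nonempty.\<close>

definition codebook :: "nat \<Rightarrow> ((nat \<Rightarrow> real) \<Rightarrow> real) set" where
  "codebook W = {g \<in> L2 d \<Omega>. g = (\<lambda>x. 0) \<or> g \<in> canonical_functions \<rho> \<sigma> d W}"

lemma card_codebook_le: "finite (codebook W) \<and> card (codebook W) \<le> 1 + count_bound \<sigma> d W"
proof -
  have sub: "codebook W \<subseteq> insert (\<lambda>x. 0) (canonical_functions \<rho> \<sigma> d W)"
    unfolding codebook_def by auto
  moreover have fin: "finite (insert (\<lambda>x. 0) (canonical_functions \<rho> \<sigma> d W))"
    using card_canonical_functions_le by auto
  ultimately have "card (codebook W) \<le> card (insert (\<lambda>x. 0) (canonical_functions \<rho> \<sigma> d W))"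
    by (intro card_mono)
  also have "\<dots> \<le> Suc (card (canonical_functions \<rho> \<sigma> d W))"
    by (rule card_insert_le_m1) simp_all
  finally show ?thesis
    using finite_subset[OF sub fin] card_canonical_functions_le[of \<rho> \<sigma> d W] by simp
qed

definition admissible_sizes :: "nat \<Rightarrow> nat set" where
  "admissible_sizes R = {W. 1 \<le> W \<and> W \<le> R \<and> card (codebook W) \<le> 2 ^ R}"

definition rate_codebook :: "nat \<Rightarrow> ((nat \<Rightarrow> real) \<Rightarrow> real) set" where
  "rate_codebook R =
     (if admissible_sizes R = {} then {\<lambda>x. 0} else codebook (Max (admissible_sizes R)))"

lemma finite_admissible_sizes: "finite (admissible_sizes R)"
  by (rule finite_subset[of _ "{..R}"]) (auto simp: admissible_sizes_def)

lemma rate_codebook_subset_L2: "rate_codebook R \<subseteq> L2 d \<Omega>"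
  unfolding rate_codebook_def codebook_def using zero_in_L2 by auto

lemma zero_in_rate_codebook: "(\<lambda>x. 0) \<in> rate_codebook R"
  unfolding rate_codebook_def codebook_def using zero_in_L2 by auto

lemma card_rate_codebook_le: "finite (rate_codebook R) \<and> card (rate_codebook R) \<le> 2 ^ R"
proof (cases "admissible_sizes R = {}")
  case False
  then have "Max (admissible_sizes R) \<in> admissible_sizes R"
    using finite_admissible_sizes by simp
  then show ?thesis
    unfolding rate_codebook_def admissible_sizes_def using False card_codebook_le by auto
qed (simp add: rate_codebook_def)

definition codeword :: "nat \<Rightarrow> ((nat \<Rightarrow> real) \<Rightarrow> real) \<Rightarrow> bool list" where
  "codeword R = (SOME c. c ` rate_codebook R \<subseteq> {bs. length bs = R} \<and> inj_on c (rate_codebook R))"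

lemma codeword_inj:
  "codeword R ` rate_codebook R \<subseteq> {bs. length bs = R} \<and> inj_on (codeword R) (rate_codebook R)"
proof -
  have "finite {bs :: bool list. length bs = R}" "card {bs :: bool list. length bs = R} = 2 ^ R"
    using finite_lists_length_eq[of "UNIV :: bool set" R] card_lists_length_eq[of "UNIV :: bool set" R]
    by simp_all
  then have "\<exists>c. c ` rate_codebook R \<subseteq> {bs :: bool list. length bs = R} \<and> inj_on c (rate_codebook R)"
    using card_le_inj[of "rate_codebook R" "{bs :: bool list. length bs = R}"] card_rate_codebook_le
    by auto
  then show ?thesis unfolding codeword_def by (rule someI_ex)
qed

definition nearest :: "nat \<Rightarrow> ((nat \<Rightarrow> real) \<Rightarrow> real) \<Rightarrow> ((nat \<Rightarrow> real) \<Rightarrow> real)" where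
  "nearest R f = (SOME g. g \<in> rate_codebook R \<and>
                    (\<forall>h\<in>rate_codebook R. L2dist_sq d \<Omega> f g \<le> L2dist_sq d \<Omega> f h))"

lemma nearest_in_rate_codebook:
  "nearest R f \<in> rate_codebook R \<and>
   (\<forall>h\<in>rate_codebook R. L2dist_sq d \<Omega> f (nearest R f) \<le> L2dist_sq d \<Omega> f h)"
proof -
  let ?D = "(\<lambda>h. L2dist_sq d \<Omega> f h) ` rate_codebook R"
  have fin: "finite ?D" and ne: "?D \<noteq> {}"
    using card_rate_codebook_le zero_in_rate_codebook by auto
  obtain g where "g \<in> rate_codebook R" "Min ?D = L2dist_sq d \<Omega> f g"
    using Min_in[OF fin ne] by auto
  moreover have "\<forall>h\<in>rate_codebook R. Min ?D \<le> L2dist_sq d \<Omega> f h"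
    using Min_le[OF fin] by simp
  ultimately have "\<exists>g. g \<in> rate_codebook R \<and>
      (\<forall>h\<in>rate_codebook R. L2dist_sq d \<Omega> f g \<le> L2dist_sq d \<Omega> f h)"
    by auto
  then show ?thesis unfolding nearest_def by (rule someI_ex)
qed

definition encoder :: "nat \<Rightarrow> ((nat \<Rightarrow> real) \<Rightarrow> real) \<Rightarrow> bool list" where
  "encoder R f = codeword R (nearest R f)"

definition decoder :: "nat \<Rightarrow> bool list \<Rightarrow> ((nat \<Rightarrow> real) \<Rightarrow> real)" where
  "decoder R bs =
     (if bs \<in> codeword R ` rate_codebook R then inv_into (rate_codebook R) (codeword R) bs
      else (\<lambda>x. 0))"

lemma length_encoder: "length (encoder R f) = R"
  using codeword_inj nearest_in_rate_codebook unfolding encoder_def by blast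

lemma decoder_in_L2: "decoder R bs \<in> L2 d \<Omega>"
  unfolding decoder_def
  using rate_codebook_subset_L2 inv_into_into[of bs "codeword R" "rate_codebook R"] zero_in_L2 by auto

lemma decoder_encoder: "decoder R (encoder R f) = nearest R f"
  unfolding decoder_def encoder_def
  using nearest_in_rate_codebook codeword_inj by (auto intro: inv_into_f_f)

lemma encoder_error_le:
  assumes "\<rho> \<in> borel_measurable borel" "\<rho> 0 = 0" "1 \<le> d"
    and "f \<in> L2 d \<Omega>" "0 < \<epsilon>" "admissible_sizes R \<noteq> {}"
    and "W_eps \<sigma> \<rho> d \<Omega> f \<epsilon> \<noteq> \<infinity>" "the_enat (W_eps \<sigma> \<rho> d \<Omega> f \<epsilon>) \<le> Max (admissible_sizes R)"
  shows "L2dist d \<Omega> f (decoder R (encoder R f)) \<le> \<epsilon>"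
proof -
  obtain g where g: "1 \<le> the_enat (W_eps \<sigma> \<rho> d \<Omega> f \<epsilon>)"
    "g \<in> NN \<sigma> \<rho> d (the_enat (W_eps \<sigma> \<rho> d \<Omega> f \<epsilon>))" "L2dist_sq d \<Omega> f g \<le> ennreal (\<epsilon>\<^sup>2)"
    using W_eps_attained[OF assms(7)] by blast
  have "L2dist_sq d \<Omega> f g < \<infinity>" using g(3) by (rule le_less_trans) simp
  then have "g \<in> L2 d \<Omega>"
    using L2_if_L2dist_sq_finite[OF assms(4)] NN_measurable[OF assms(1) g(2)] by blast
  moreover have "g \<in> canonical_functions \<rho> \<sigma> d (Max (admissible_sizes R))"
    using NN_subset_canonical_functions[where \<rho> = \<rho>, OF assms(2,3) g(1) assms(8)] g(2) by blast
  ultimately have "g \<in> rate_codebook R"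
    unfolding rate_codebook_def codebook_def using assms(6) by simp
  then have "L2dist_sq d \<Omega> f (nearest R f) \<le> ennreal (\<epsilon>\<^sup>2)"
    using nearest_in_rate_codebook g(3) order_trans by blast
  then show ?thesis
    unfolding decoder_encoder using L2dist_le_if_sq_le assms(5) by simp
qed

text \<open>\<open>W = \<lceil>R^(1 - \<eta>)\<rceil>\<close> is admissible because the logarithm of the count bound is
  \<open>O(\<sigma> W log^2 W) = o(R)\<close>.\<close>

lemma admissible_sizes_large:
  assumes "0 < \<eta>" "\<eta> < 1"
  shows "eventually (\<lambda>R. admissible_sizes R \<noteq> {} \<and>
                          real R powr (1 - \<eta>) \<le> real (Max (admissible_sizes R))) sequentially"
proof -
  have "eventually (\<lambda>x. log_count_majorant \<sigma> (x powr (1 - \<eta>) + (real d + 5)) \<le> x * ln 2 \<and> 1 \<le> x)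
      at_top"
    using log_count_majorant_sublinear[OF assms] eventually_ge_at_top by (rule eventually_conj)
  then have "eventually (\<lambda>R. log_count_majorant \<sigma> (real R powr (1 - \<eta>) + (real d + 5))
      \<le> real R * ln 2 \<and> 1 \<le> real R) sequentially"
    using filterlim_real_sequentially unfolding filterlim_iff by blast
  then show ?thesis
  proof eventually_elim
    case (elim R)
    define x where "x = real R powr (1 - \<eta>)"
    define W where "W = nat \<lceil>x\<rceil>"
    have "1 \<le> x" unfolding x_def using elim assms by (simp add: ge_one_powr_ge_zero)
    moreover have "x \<le> real R"
      using powr_mono[of "1 - \<eta>" 1 "real R"] elim assms unfolding x_def by simp
    ultimately have W: "1 \<le> W" "W \<le> R" "x \<le> real W" "real W \<le> x + 1"
      unfolding W_def by linarith+
    have "ln (real (1 + count_bound \<sigma> d W)) \<le> log_count_majorant \<sigma> (real (d + W + 4))"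
      by (rule ln_count_bound_le[OF W(1)])
    also have "\<dots> \<le> log_count_majorant \<sigma> (x + (real d + 5))"
      using W by (intro log_count_majorant_mono) auto
    also have "\<dots> \<le> ln (2 ^ R)" using elim unfolding x_def by (simp add: ln_realpow)
    finally have "real (1 + count_bound \<sigma> d W) \<le> real ((2::nat) ^ R)"
      by (subst (asm) ln_le_cancel_iff) simp_all
    then have "1 + count_bound \<sigma> d W \<le> 2 ^ R" by (simp only: of_nat_le_iff)
    then have "W \<in> admissible_sizes R"
      unfolding admissible_sizes_def using W card_codebook_le[of W] by simp
    then show ?case
      using Max_ge[OF finite_admissible_sizes] W(3) unfolding x_def by force
  qed
qed

end

lemma bounded_rate_from_budget:
  fixes e M :: "nat \<Rightarrow> real"
  assumes "0 < \<tau>" "0 < C" "\<eta> < 1" and e_nonneg: "\<And>R. 0 \<le> e R"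
    and budget: "eventually (\<lambda>R. real R powr (1 - \<eta>) \<le> M R \<and>
        (\<forall>\<epsilon>. 0 < \<epsilon> \<and> \<epsilon> < 1 \<and> C * \<epsilon> powr (- \<tau>) \<le> M R \<longrightarrow> e R \<le> \<epsilon>)) sequentially"
  shows "Bseq (\<lambda>R. real R powr ((1 - \<eta>) / \<tau>) * e R)"
proof -
  have "filterlim (\<lambda>R::nat. real R powr (1 - \<eta>)) at_top sequentially"
    using assms(3) by real_asymp
  then have "eventually (\<lambda>R. C < real R powr (1 - \<eta>)) sequentially"
    by (simp add: filterlim_at_top_dense)
  with budget have "eventually (\<lambda>R. norm (real R powr ((1 - \<eta>) / \<tau>) * e R) \<le> C powr (1 / \<tau>))
      sequentially"
  proof eventually_elim
    case (elim R)
    define r where "r = real R powr (1 - \<eta>)"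
    define \<epsilon> where "\<epsilon> = (C / r) powr (1 / \<tau>)"
    have "C < r" using elim unfolding r_def by simp
    then have "0 < r" using assms(2) by linarith
    then have r: "0 < C / r" "C / r < 1" using assms(2) \<open>C < r\<close> by simp_all
    then have "0 < \<epsilon>" "\<epsilon> < 1"
      unfolding \<epsilon>_def using assms \<open>0 < r\<close> powr01_less_one[OF r] by simp_all
    moreover have "C * \<epsilon> powr (- \<tau>) = r"
      unfolding \<epsilon>_def using r assms(1,2) \<open>0 < r\<close> by (simp add: powr_powr powr_minus_divide)
    ultimately have "e R \<le> \<epsilon>" using elim unfolding r_def by auto
    moreover have "real R powr ((1 - \<eta>) / \<tau>) * \<epsilon> = C powr (1 / \<tau>)"
    proof -
      have "0 < real R" using \<open>0 < r\<close> unfolding r_def by (cases "R = 0") auto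
      moreover have "r powr (1 / \<tau>) = real R powr ((1 - \<eta>) / \<tau>)"
        unfolding r_def by (simp add: powr_powr)
      ultimately show ?thesis
        unfolding \<epsilon>_def using \<open>0 < r\<close> assms(2) by (simp add: powr_divide)
    qed
    ultimately show ?case
      using e_nonneg[of R] mult_left_mono[of "e R" \<epsilon> "real R powr ((1 - \<eta>) / \<tau>)"] by simp
  qed
  then show ?thesis by (rule BfunI)
qed

lemma approx_space_coding_rate:
  assumes "\<rho> \<in> borel_measurable borel" "\<rho> 0 = 0" "1 \<le> d" "0 < \<tau>" "0 < \<eta>" "\<eta> < 1"
    and "f \<in> approx_space \<tau> \<sigma> \<rho> d \<Omega>"
  shows "Bseq (\<lambda>R. real R powr ((1 - \<eta>) / \<tau>) *
                    L2dist d \<Omega> f (decoder \<rho> \<sigma> d \<Omega> R (encoder \<rho> \<sigma> d \<Omega> R f)))"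
proof -
  obtain C where f: "f \<in> L2 d \<Omega>" and "0 < C" and W_C: "\<And>\<epsilon>. 0 < \<epsilon> \<Longrightarrow> \<epsilon> < 1 \<Longrightarrow>
      W_eps \<sigma> \<rho> d \<Omega> f \<epsilon> \<noteq> \<infinity> \<and> real (the_enat (W_eps \<sigma> \<rho> d \<Omega> f \<epsilon>)) \<le> C * \<epsilon> powr (- \<tau>)"
    using assms(7) unfolding approx_space_def by blast
  define err where "err R = L2dist d \<Omega> f (decoder \<rho> \<sigma> d \<Omega> R (encoder \<rho> \<sigma> d \<Omega> R f))" for R
  define M where "M R = real (Max (admissible_sizes \<rho> \<sigma> d \<Omega> R))" for R
  have err_le: "err R \<le> \<epsilon>"
    if "admissible_sizes \<rho> \<sigma> d \<Omega> R \<noteq> {}" "0 < \<epsilon>" "\<epsilon> < 1" "C * \<epsilon> powr (- \<tau>) \<le> M R" for R \<epsilon>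
  proof -
    have finite: "W_eps \<sigma> \<rho> d \<Omega> f \<epsilon> \<noteq> \<infinity>"
      and "real (the_enat (W_eps \<sigma> \<rho> d \<Omega> f \<epsilon>)) \<le> real (Max (admissible_sizes \<rho> \<sigma> d \<Omega> R))"
      using W_C[OF that(2,3)] that(4) unfolding M_def by auto
    then have "the_enat (W_eps \<sigma> \<rho> d \<Omega> f \<epsilon>) \<le> Max (admissible_sizes \<rho> \<sigma> d \<Omega> R)"
      by (simp only: of_nat_le_iff)
    with finite show ?thesis
      unfolding err_def by (rule encoder_error_le[OF assms(1-3) f that(2,1)])
  qed
  have budget: "eventually (\<lambda>R. real R powr (1 - \<eta>) \<le> M R \<and>
      (\<forall>\<epsilon>. 0 < \<epsilon> \<and> \<epsilon> < 1 \<and> C * \<epsilon> powr (- \<tau>) \<le> M R \<longrightarrow> err R \<le> \<epsilon>)) sequentially"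
    using admissible_sizes_large[OF assms(5,6)] by eventually_elim (auto simp: M_def intro: err_le)
  have "Bseq (\<lambda>R. real R powr ((1 - \<eta>) / \<tau>) * err R)"
    by (rule bounded_rate_from_budget[OF assms(4) \<open>0 < C\<close> assms(6) _ budget])
      (simp add: err_def L2dist_def)
  then show ?thesis unfolding err_def .
qed

theorem lemmaF2:
  fixes d \<sigma> :: nat and \<Omega> :: "(nat \<Rightarrow> real) set" and \<rho> :: "real \<Rightarrow> real"
  assumes "d \<ge> 1"
    and "\<Omega> \<in> sets (lebd d)"
    and "\<rho> \<in> borel_measurable borel"
    and "\<rho> 0 = 0"
    and "\<sigma> \<ge> 1"
  shows "\<exists>(E :: nat \<Rightarrow> ((nat \<Rightarrow> real) \<Rightarrow> real) \<Rightarrow> bool list)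
            (D :: nat \<Rightarrow> bool list \<Rightarrow> ((nat \<Rightarrow> real) \<Rightarrow> real)).
           (\<forall>R f. f \<in> L2 d \<Omega> \<longrightarrow> length (E R f) = R) \<and>
           (\<forall>R bs. length bs = R \<longrightarrow> D R bs \<in> L2 d \<Omega>) \<and>
           (\<forall>\<tau>::real. \<tau> > 0 \<longrightarrow> (\<forall>\<delta>::real. 0 < \<delta> \<and> \<delta> < 1 / \<tau> \<longrightarrow>
              approx_space \<tau> \<sigma> \<rho> d \<Omega> \<subseteq>
                {f \<in> L2 d \<Omega>. \<exists>C. \<forall>R::nat. R \<ge> 1 \<longrightarrow>
                   real R powr (1 / \<tau> - \<delta>) * L2dist d \<Omega> f (D R (E R f)) \<le> C}))"
proof (intro exI[of _ "encoder \<rho> \<sigma> d \<Omega>"] exI[of _ "decoder \<rho> \<sigma> d \<Omega>"] conjI allI impI subsetI)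
  show "length (encoder \<rho> \<sigma> d \<Omega> R f) = R" for R f by (rule length_encoder)
  show "decoder \<rho> \<sigma> d \<Omega> R bs \<in> L2 d \<Omega>" for R bs by (rule decoder_in_L2)
next
  fix \<tau> \<delta> :: real and f
  assume \<tau>: "0 < \<tau>" and \<delta>: "0 < \<delta> \<and> \<delta> < 1 / \<tau>" and f: "f \<in> approx_space \<tau> \<sigma> \<rho> d \<Omega>"
  define \<eta> where "\<eta> = \<delta> * \<tau>"
  have \<eta>: "0 < \<eta>" "\<eta> < 1" "(1 - \<eta>) / \<tau> = 1 / \<tau> - \<delta>"
    using \<tau> \<delta> unfolding \<eta>_def by (auto simp: field_simps)
  obtain K where K: "\<And>R. \<bar>real R powr (1 / \<tau> - \<delta>) *
      L2dist d \<Omega> f (decoder \<rho> \<sigma> d \<Omega> R (encoder \<rho> \<sigma> d \<Omega> R f))\<bar> \<le> K"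
    using approx_space_coding_rate[OF assms(3,4,1) \<tau> \<eta>(1,2) f] unfolding Bseq_def \<eta>(3) by auto
  have "f \<in> L2 d \<Omega>" using f unfolding approx_space_def by blast
  then show "f \<in> {f \<in> L2 d \<Omega>. \<exists>C. \<forall>R::nat. R \<ge> 1 \<longrightarrow>
      real R powr (1 / \<tau> - \<delta>) * L2dist d \<Omega> f (decoder \<rho> \<sigma> d \<Omega> R (encoder \<rho> \<sigma> d \<Omega> R f)) \<le> C}"
    using abs_le_D1[OF K] by blast
qed

end
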